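(* Every $2\times2\times2$ quaternion tensor $T$ satisfies $\mathrm{rank}(T)\le3$.
   Context: $\mathbb{H}$ denotes the real quaternions. An $n_1\times n_2\times n_3$ quaternion tensor is an array $T=(T_{ijk})$ with entries in $\mathbb{H}$, $1\le i\le n_1$, $1\le j\le n_2$, $1\le k\le n_3$; it is written $T=(A_1;\dots;A_{n_2})$ where the frontal slice $A_j$ is the $n_1\times n_3$ matrix $(T_{ijk})_{i,k}$. A nonzero tensor is simple if $T_{ijk}=a_ib_jc_k$ (quaternion product in this order) for some $\vec a\in\mathbb{H}^{n_1},\vec b\in\mathbb{H}^{n_2},\vec c\in\mathbb{H}^{n_3}$. The rank of $T$ is the least number of simple tensors summing to $T$ (the zero tensor has rank $0$). *)

theory Defs
  imports Main "HOL-Analysis.Analysis"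
begin

text \<open>Real quaternions q = re + im1 i + im2 j + im3 k, with the Hamilton product.\<close>

datatype quat = Quat (Re_q: real) (Im1: real) (Im2: real) (Im3: real)

definition qzero :: quat where "qzero = Quat 0 0 0 0"

definition qadd :: "quat \<Rightarrow> quat \<Rightarrow> quat" where
  "qadd p q = Quat (Re_q p + Re_q q) (Im1 p + Im1 q) (Im2 p + Im2 q) (Im3 p + Im3 q)"

definition qmul :: "quat \<Rightarrow> quat \<Rightarrow> quat" where
  "qmul p q = Quat
     (Re_q p * Re_q q - Im1 p * Im1 q - Im2 p * Im2 q - Im3 p * Im3 q)
     (Re_q p * Im1 q + Im1 p * Re_q q + Im2 p * Im3 q - Im3 p * Im2 q)
     (Re_q p * Im2 q - Im1 p * Im3 q + Im2 p * Re_q q + Im3 p * Im1 q)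
     (Re_q p * Im3 q + Im1 p * Im2 q - Im2 p * Im1 q + Im3 p * Re_q q)"

text \<open>An n1 x n2 x n3 quaternion tensor: a function on index triples; only entries with
  i < n1, j < n2, k < n3 (0-based) are meaningful.\<close>

type_synonym qtensor = "nat \<Rightarrow> nat \<Rightarrow> nat \<Rightarrow> quat"

definition qtensor_eq :: "nat \<Rightarrow> nat \<Rightarrow> nat \<Rightarrow> qtensor \<Rightarrow> qtensor \<Rightarrow> bool" where
  "qtensor_eq n1 n2 n3 S T \<longleftrightarrow> (\<forall>i<n1. \<forall>j<n2. \<forall>k<n3. S i j k = T i j k)"

definition qtensor_zero :: qtensor where "qtensor_zero = (\<lambda>i j k. qzero)"

definition qtensor_add :: "qtensor \<Rightarrow> qtensor \<Rightarrow> qtensor" where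
  "qtensor_add S T = (\<lambda>i j k. qadd (S i j k) (T i j k))"

definition simple_qtensor :: "nat \<Rightarrow> nat \<Rightarrow> nat \<Rightarrow> qtensor \<Rightarrow> bool" where
  "simple_qtensor n1 n2 n3 T \<longleftrightarrow>
     \<not> qtensor_eq n1 n2 n3 T qtensor_zero \<and>
     (\<exists>a b c :: nat \<Rightarrow> quat. \<forall>i<n1. \<forall>j<n2. \<forall>k<n3. T i j k = qmul (qmul (a i) (b j)) (c k))"

definition qtensor_rank :: "nat \<Rightarrow> nat \<Rightarrow> nat \<Rightarrow> qtensor \<Rightarrow> nat" where
  "qtensor_rank n1 n2 n3 T = (LEAST r. \<exists>Ts :: qtensor list. length Ts = r \<and>
      (\<forall>S\<in>set Ts. simple_qtensor n1 n2 n3 S) \<and>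
      qtensor_eq n1 n2 n3 T (foldr qtensor_add Ts qtensor_zero))"

end

theory Submission
  imports Defs
begin

text \<open>Everything happens over an arbitrary division ring, which the quaternions are.
  If the corners T 0 0 0 and T 1 0 0 are both nonzero, a triad with factors (1, l), (1, m),
  (T 0 0 0, T 0 0 1) reproduces the entries (0,0,k) and (1,j,0); the entries (0,1,k) and
  (1,j,1) are then corrected by one triad each.  If exactly one corner vanishes, one triad
  through the other corner and two coordinate triads suffice (after swapping the two
  horizontal slices if needed); if both vanish, the three lines T i 0 1, T 0 1 k, T 1 1 k
  are coordinate triads.  Triads that vanish on the box are dropped to obtain simple
  tensors.\<close>

instantiation quat :: "{zero,one,plus,minus,uminus,times,inverse}"
begin
definition "0 = qzero"
definition "1 = Quat 1 0 0 0"
definition "p + q = qadd p q"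
definition "p - q = Quat (Re_q p - Re_q q) (Im1 p - Im1 q) (Im2 p - Im2 q) (Im3 p - Im3 q)"
definition "- q = Quat (- Re_q q) (- Im1 q) (- Im2 q) (- Im3 q)"
definition "p * q = qmul p q"
definition "inverse q = (let n = (Re_q q)\<^sup>2 + (Im1 q)\<^sup>2 + (Im2 q)\<^sup>2 + (Im3 q)\<^sup>2 in
   Quat (Re_q q / n) (- Im1 q / n) (- Im2 q / n) (- Im3 q / n))"
definition "divide p q = p * inverse (q::quat)"
instance ..
end

lemma quat_eqI:
  "Re_q p = Re_q q \<Longrightarrow> Im1 p = Im1 q \<Longrightarrow> Im2 p = Im2 q \<Longrightarrow> Im3 p = Im3 q \<Longrightarrow> p = q"
  by (cases p; cases q) auto

lemma quat_component_simps [simp]: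
  "Re_q 0 = 0" "Im1 0 = 0" "Im2 0 = 0" "Im3 0 = 0"
  "Re_q 1 = 1" "Im1 1 = 0" "Im2 1 = 0" "Im3 1 = 0"
  "Re_q (p + q) = Re_q p + Re_q q" "Im1 (p + q) = Im1 p + Im1 q"
  "Im2 (p + q) = Im2 p + Im2 q" "Im3 (p + q) = Im3 p + Im3 q"
  "Re_q (p - q) = Re_q p - Re_q q" "Im1 (p - q) = Im1 p - Im1 q"
  "Im2 (p - q) = Im2 p - Im2 q" "Im3 (p - q) = Im3 p - Im3 q"
  "Re_q (- q) = - Re_q q" "Im1 (- q) = - Im1 q"
  "Im2 (- q) = - Im2 q" "Im3 (- q) = - Im3 q"
  "Re_q (p * q) = Re_q p * Re_q q - Im1 p * Im1 q - Im2 p * Im2 q - Im3 p * Im3 q"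
  "Im1 (p * q) = Re_q p * Im1 q + Im1 p * Re_q q + Im2 p * Im3 q - Im3 p * Im2 q"
  "Im2 (p * q) = Re_q p * Im2 q - Im1 p * Im3 q + Im2 p * Re_q q + Im3 p * Im1 q"
  "Im3 (p * q) = Re_q p * Im3 q + Im1 p * Im2 q - Im2 p * Im1 q + Im3 p * Re_q q"
  by (simp_all add: zero_quat_def one_quat_def plus_quat_def minus_quat_def uminus_quat_def
      times_quat_def qzero_def qadd_def qmul_def)

lemma quat_norm_square_nonzero:
  assumes "(q::quat) \<noteq> 0"
  shows "(Re_q q)\<^sup>2 + (Im1 q)\<^sup>2 + (Im2 q)\<^sup>2 + (Im3 q)\<^sup>2 \<noteq> 0"
proof
  assume "(Re_q q)\<^sup>2 + (Im1 q)\<^sup>2 + (Im2 q)\<^sup>2 + (Im3 q)\<^sup>2 = 0"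
  then have "Re_q q = 0" "Im1 q = 0" "Im2 q = 0" "Im3 q = 0"
    by (smt (verit) power2_less_eq_zero_iff zero_le_power2)+
  then have "q = 0" by (intro quat_eqI) auto
  with assms show False by simp
qed

instance quat :: division_ring
proof
  fix a b c :: quat
  show "a * b * c = a * (b * c)" by (rule quat_eqI) (simp_all add: algebra_simps)
  show "1 * a = a" by (rule quat_eqI) simp_all
  show "a * 1 = a" by (rule quat_eqI) simp_all
  show "(a + b) * c = a * c + b * c" by (rule quat_eqI) (simp_all add: algebra_simps)
  show "a * (b + c) = a * b + a * c" by (rule quat_eqI) (simp_all add: algebra_simps)
  show "a + b + c = a + (b + c)" by (rule quat_eqI) simp_all
  show "a + b = b + a" by (rule quat_eqI) simp_all
  show "0 + a = a" by (rule quat_eqI) simp_all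
  show "- a + a = 0" by (rule quat_eqI) simp_all
  show "a - b = a + - b" by (rule quat_eqI) simp_all
  show "(0::quat) \<noteq> 1" by (metis quat_component_simps(1,5) zero_neq_one)
  show "a / b = a * inverse b" by (simp add: divide_quat_def)
  show "inverse (0::quat) = 0" by (rule quat_eqI) (simp_all add: inverse_quat_def Let_def)
next
  fix a :: quat
  assume "a \<noteq> 0"
  define n where "n = (Re_q a)\<^sup>2 + (Im1 a)\<^sup>2 + (Im2 a)\<^sup>2 + (Im3 a)\<^sup>2"
  have "n \<noteq> 0" using quat_norm_square_nonzero[OF \<open>a \<noteq> 0\<close>] by (simp add: n_def)
  have inverse_a: "inverse a = Quat (Re_q a / n) (- Im1 a / n) (- Im2 a / n) (- Im3 a / n)"
    by (simp add: inverse_quat_def n_def Let_def)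
  have "Re_q a * Re_q a * inverse n + Im1 a * Im1 a * inverse n + Im2 a * Im2 a * inverse n
      + Im3 a * Im3 a * inverse n = 1"
    using right_inverse[OF \<open>n \<noteq> 0\<close>] unfolding n_def power2_eq_square
    by (simp add: algebra_simps)
  then show "inverse a * a = 1" "a * inverse a = 1"
    by (intro quat_eqI; simp add: inverse_a divide_inverse algebra_simps)+
qed

lemma inverse_mult_cancel_left [simp]: "(a::'a::division_ring) \<noteq> 0 \<Longrightarrow> inverse a * (a * b) = b"
  by (simp flip: mult.assoc)

lemma mult_inverse_cancel_left [simp]: "(a::'a::division_ring) \<noteq> 0 \<Longrightarrow> a * (inverse a * b) = b"
  by (simp flip: mult.assoc)

definition triad :: "(nat \<Rightarrow> 'a::times) \<Rightarrow> (nat \<Rightarrow> 'a) \<Rightarrow> (nat \<Rightarrow> 'a) \<Rightarrow> nat \<Rightarrow> nat \<Rightarrow> nat \<Rightarrow> 'a"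
  where "triad a b c = (\<lambda>i j k. a i * b j * c k)"

definition sum_of_three_triads :: "(nat \<Rightarrow> nat \<Rightarrow> nat \<Rightarrow> 'a::semiring) \<Rightarrow> bool" where
  "sum_of_three_triads T \<longleftrightarrow> (\<exists>a\<^sub>1 b\<^sub>1 c\<^sub>1 a\<^sub>2 b\<^sub>2 c\<^sub>2 a\<^sub>3 b\<^sub>3 c\<^sub>3. \<forall>i<2. \<forall>j<2. \<forall>k<2.
     T i j k = triad a\<^sub>1 b\<^sub>1 c\<^sub>1 i j k + triad a\<^sub>2 b\<^sub>2 c\<^sub>2 i j k + triad a\<^sub>3 b\<^sub>3 c\<^sub>3 i j k)"

lemma all_less_two_nat: "(\<forall>i<(2::nat). P i) \<longleftrightarrow> P 0 \<and> P 1"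
  by (auto simp: less_Suc_eq numeral_2_eq_2)

lemma sum_of_three_triadsI:
  assumes "\<forall>i<2. \<forall>j<2. \<forall>k<2. T i j k =
     triad a\<^sub>1 b\<^sub>1 c\<^sub>1 i j k + triad a\<^sub>2 b\<^sub>2 c\<^sub>2 i j k + triad a\<^sub>3 b\<^sub>3 c\<^sub>3 i j k"
  shows "sum_of_three_triads T"
  using assms unfolding sum_of_three_triads_def by blast

lemma sum_of_three_triads_swap_first:
  assumes "sum_of_three_triads (\<lambda>i. T (1 - i))"
  shows "sum_of_three_triads T"
proof -
  obtain a\<^sub>1 b\<^sub>1 c\<^sub>1 a\<^sub>2 b\<^sub>2 c\<^sub>2 a\<^sub>3 b\<^sub>3 c\<^sub>3 where "\<forall>i<2. \<forall>j<2. \<forall>k<2. T (1 - i) j k =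
      triad a\<^sub>1 b\<^sub>1 c\<^sub>1 i j k + triad a\<^sub>2 b\<^sub>2 c\<^sub>2 i j k + triad a\<^sub>3 b\<^sub>3 c\<^sub>3 i j k"
    using assms unfolding sum_of_three_triads_def by blast
  then show ?thesis
    by (intro sum_of_three_triadsI[where a\<^sub>1 = "\<lambda>i. a\<^sub>1 (1 - i)" and a\<^sub>2 = "\<lambda>i. a\<^sub>2 (1 - i)"
          and a\<^sub>3 = "\<lambda>i. a\<^sub>3 (1 - i)"]) (simp add: all_less_two_nat triad_def)
qed

lemma sum_of_three_triads_corners_nonzero:
  fixes T :: "nat \<Rightarrow> nat \<Rightarrow> nat \<Rightarrow> 'a::division_ring"
  assumes "T 0 0 0 \<noteq> 0" and "T 1 0 0 \<noteq> 0"
  shows "sum_of_three_triads T"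
proof -
  define l where "l = T 1 0 0 * inverse (T 0 0 0)"
  define m where "m = T 0 0 0 * inverse (T 1 0 0) * T 1 1 0 * inverse (T 0 0 0)"
  show ?thesis
    by (rule sum_of_three_triadsI[where
          a\<^sub>1 = "(!) [1, l]" and b\<^sub>1 = "(!) [1, m]" and c\<^sub>1 = "(!) [T 0 0 0, T 0 0 1]" and
          a\<^sub>2 = "(!) [1, 0]" and b\<^sub>2 = "(!) [0, 1]" and
          c\<^sub>2 = "(!) [T 0 1 0 - m * T 0 0 0, T 0 1 1 - m * T 0 0 1]" and
          a\<^sub>3 = "(!) [0, 1]" and b\<^sub>3 = "(!) [T 1 0 1 - l * T 0 0 1,
                                         T 1 1 1 - T 1 1 0 * inverse (T 0 0 0) * T 0 0 1]" and
          c\<^sub>3 = "(!) [0, 1]"])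
      (use assms in \<open>simp add: all_less_two_nat triad_def l_def m_def algebra_simps\<close>)
qed

lemma sum_of_three_triads_one_corner_zero:
  fixes T :: "nat \<Rightarrow> nat \<Rightarrow> nat \<Rightarrow> 'a::division_ring"
  assumes "T 0 0 0 \<noteq> 0" and "T 1 0 0 = 0"
  shows "sum_of_three_triads T"
proof -
  define m where "m = (T 0 1 0 - T 1 1 0) * inverse (T 0 0 0)"
  define r where "r = T 0 1 1 - m * T 0 0 1"
  show ?thesis
    by (rule sum_of_three_triadsI[where
          a\<^sub>1 = "(!) [1, 0]" and b\<^sub>1 = "(!) [1, m]" and c\<^sub>1 = "(!) [T 0 0 0, T 0 0 1]" and
          a\<^sub>2 = "(!) [0, 1]" and b\<^sub>2 = "(!) [T 1 0 1, T 1 1 1 - r]" and c\<^sub>2 = "(!) [0, 1]" and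
          a\<^sub>3 = "(!) [1, 1]" and b\<^sub>3 = "(!) [0, 1]" and c\<^sub>3 = "(!) [T 1 1 0, r]"])
      (use assms in \<open>simp add: all_less_two_nat triad_def m_def r_def algebra_simps\<close>)
qed

lemma sum_of_three_triads_corners_zero:
  fixes T :: "nat \<Rightarrow> nat \<Rightarrow> nat \<Rightarrow> 'a::ring_1"
  assumes "T 0 0 0 = 0" and "T 1 0 0 = 0"
  shows "sum_of_three_triads T"
  by (rule sum_of_three_triadsI[where
        a\<^sub>1 = "(!) [T 0 0 1, T 1 0 1]" and b\<^sub>1 = "(!) [1, 0]" and c\<^sub>1 = "(!) [0, 1]" and
        a\<^sub>2 = "(!) [1, 0]" and b\<^sub>2 = "(!) [0, 1]" and c\<^sub>2 = "(!) [T 0 1 0, T 0 1 1]" and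
        a\<^sub>3 = "(!) [0, 1]" and b\<^sub>3 = "(!) [0, 1]" and c\<^sub>3 = "(!) [T 1 1 0, T 1 1 1]"])
    (use assms in \<open>simp add: all_less_two_nat triad_def\<close>)

lemma sum_of_three_triads_division_ring:
  fixes T :: "nat \<Rightarrow> nat \<Rightarrow> nat \<Rightarrow> 'a::division_ring"
  shows "sum_of_three_triads T"
proof (cases "T 0 0 0 = 0 \<and> T 1 0 0 = 0")
  case True
  then show ?thesis by (simp add: sum_of_three_triads_corners_zero)
next
  case False
  have corner_nonzero: "sum_of_three_triads S"
    if "S 0 0 0 \<noteq> 0" for S :: "nat \<Rightarrow> nat \<Rightarrow> nat \<Rightarrow> 'a"
    using that sum_of_three_triads_corners_nonzero sum_of_three_triads_one_corner_zero by blast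
  show ?thesis
  proof (cases "T 0 0 0 = 0")
    case True
    with False have "sum_of_three_triads (\<lambda>i. T (1 - i))" by (intro corner_nonzero) simp
    then show ?thesis by (rule sum_of_three_triads_swap_first)
  qed (rule corner_nonzero)
qed

lemma foldr_qtensor_add_apply:
  "foldr qtensor_add Ts qtensor_zero i j k = (\<Sum>S\<leftarrow>Ts. S i j k)"
  by (induction Ts) (simp_all add: qtensor_add_def qtensor_zero_def plus_quat_def zero_quat_def)

lemma qtensor_rank_le_length:
  assumes triads: "\<forall>S\<in>set Ts. \<exists>a b c. S = triad a b c"
    and T_eq: "\<forall>i<n1. \<forall>j<n2. \<forall>k<n3. T i j k = (\<Sum>S\<leftarrow>Ts. S i j k)"
  shows "qtensor_rank n1 n2 n3 T \<le> length Ts"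
proof -
  define Us where "Us = filter (\<lambda>S. \<not> qtensor_eq n1 n2 n3 S qtensor_zero) Ts"
  have "\<forall>S\<in>set Us. simple_qtensor n1 n2 n3 S"
    using triads unfolding Us_def simple_qtensor_def triad_def times_quat_def by fastforce
  moreover have "(\<Sum>S\<leftarrow>Us. S i j k) = (\<Sum>S\<leftarrow>Ts. S i j k)" if "i < n1" "j < n2" "k < n3" for i j k
    unfolding Us_def using that
    by (induction Ts) (auto simp: qtensor_eq_def qtensor_zero_def zero_quat_def)
  then have "qtensor_eq n1 n2 n3 T (foldr qtensor_add Us qtensor_zero)"
    using T_eq by (simp add: qtensor_eq_def foldr_qtensor_add_apply)
  ultimately have "qtensor_rank n1 n2 n3 T \<le> length Us"
    unfolding qtensor_rank_def by (intro Least_le) blast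
  also have "\<dots> \<le> length Ts" unfolding Us_def by simp
  finally show ?thesis .
qed

theorem mainTheorem5:
  fixes T :: qtensor
  shows "qtensor_rank 2 2 2 T \<le> 3"
proof -
  obtain a\<^sub>1 b\<^sub>1 c\<^sub>1 a\<^sub>2 b\<^sub>2 c\<^sub>2 a\<^sub>3 b\<^sub>3 c\<^sub>3 where "\<forall>i<2. \<forall>j<2. \<forall>k<2.
      T i j k = triad a\<^sub>1 b\<^sub>1 c\<^sub>1 i j k + triad a\<^sub>2 b\<^sub>2 c\<^sub>2 i j k + triad a\<^sub>3 b\<^sub>3 c\<^sub>3 i j k"
    using sum_of_three_triads_division_ring[of T] unfolding sum_of_three_triads_def by blast
  then have "qtensor_rank 2 2 2 T \<le> length [triad a\<^sub>1 b\<^sub>1 c\<^sub>1, triad a\<^sub>2 b\<^sub>2 c\<^sub>2, triad a\<^sub>3 b\<^sub>3 c\<^sub>3]"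
    by (intro qtensor_rank_le_length) (auto simp: add.assoc)
  then show ?thesis by simp
qed

end
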